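(* Let $G$ be a finite non-abelian group satisfying condition (Con). Then the bipartition width of $\mathcal C_G$ satisfies $$bw(\mathcal C_G)\ge \begin{cases}\frac{|G|\,|Z(G)|}{4}, & |G| \text{ even},\\ \frac{(|G|^2-1)|Z(G)|}{4|G|}, & |G| \text{ odd}.\end{cases}$$
   Context: For a finite group $G$, the commuting graph $\mathcal C_G$ is the simple undirected graph with vertex set $G$ in which distinct $u,v\in G$ are adjacent iff $uv=vu$. $Z(G)$ is the center of $G$ and $C(v)=\{w\in G: wv=vw\}$ the centralizer of $v$. Condition (Con): for all $u,v\in G\setminus Z(G)$, either $C(u)=C(v)$ or $C(u)\cap C(v)=Z(G)$. For a vertex subset $S$, $\partial S$ is the set of edges with one endpoint in $S$ and one outside $S$. The bipartition width of a graph on vertex set $V$ is $bw=\min\{|\partial S|: S\subset V,\ |S|=\lfloor |V|/2\rfloor\}$. *)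

theory Defs
  imports Complex_Main "HOL-Algebra.Group"
begin

definition grp_center :: "('a, 'b) monoid_scheme \<Rightarrow> 'a set" where
  "grp_center G = {z \<in> carrier G. \<forall>w \<in> carrier G. z \<otimes>\<^bsub>G\<^esub> w = w \<otimes>\<^bsub>G\<^esub> z}"

definition grp_centralizer :: "('a, 'b) monoid_scheme \<Rightarrow> 'a \<Rightarrow> 'a set" where
  "grp_centralizer G v = {w \<in> carrier G. w \<otimes>\<^bsub>G\<^esub> v = v \<otimes>\<^bsub>G\<^esub> w}"

definition con_condition :: "('a, 'b) monoid_scheme \<Rightarrow> bool" where
  "con_condition G \<longleftrightarrow>
     (\<forall>u \<in> carrier G - grp_center G. \<forall>v \<in> carrier G - grp_center G.
        grp_centralizer G u = grp_centralizer G v \<or>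
        grp_centralizer G u \<inter> grp_centralizer G v = grp_center G)"

definition commuting_edges :: "('a, 'b) monoid_scheme \<Rightarrow> 'a set set" where
  "commuting_edges G = {{u, v} | u v. u \<in> carrier G \<and> v \<in> carrier G \<and> u \<noteq> v \<and>
                                       u \<otimes>\<^bsub>G\<^esub> v = v \<otimes>\<^bsub>G\<^esub> u}"

definition comm_boundary :: "('a, 'b) monoid_scheme \<Rightarrow> 'a set \<Rightarrow> 'a set set" where
  "comm_boundary G S = {e \<in> commuting_edges G. card (e \<inter> S) = 1}"

definition comm_bw :: "('a, 'b) monoid_scheme \<Rightarrow> nat" where
  "comm_bw G = Min {card (comm_boundary G S) | S. S \<subset> carrier G \<and> card S = card (carrier G) div 2}"

end

theory Submission
  imports Defs "HOL-Algebra.Coset"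
begin

text \<open>
  Every central element is adjacent to all other vertices of the commuting graph. Hence, if a
  bipartition side \<open>S\<close> of size \<open>s = \<lfloor>|G|/2\<rfloor>\<close> contains \<open>a\<close> central elements and misses \<open>b\<close>, the
  edges from the central elements of \<open>S\<close> to the complement and from the central elements outside
  \<open>S\<close> to the non-central elements of \<open>S\<close> already give \<open>a (|G| - s) + b (s - a)\<close> boundary edges.
  As the centre is a proper subgroup of a non-abelian group, Lagrange gives \<open>a + b \<le> s\<close>, and
  minimising the count under this constraint yields the stated bounds.
\<close>

lemma proper_subgroup_card_le_half:
  fixes G (structure)
  assumes "group G" and "finite (carrier G)" and "subgroup H G" and "H \<noteq> carrier G"
  shows "2 * card H \<le> order G"
proof -
  interpret group G by fact
  have H_carrier: "H \<subseteq> carrier G" using assms(3) by (rule subgroup.subset)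
  have H_coset: "H \<in> rcosets H"
    using rcosetsI[OF H_carrier one_closed] coset_mult_one[OF H_carrier] by simp
  have "finite (rcosets H)"
    using assms(2) rcosets_subset_PowG[OF assms(3)] finite_subset by blast
  then have "card (rcosets H) \<noteq> 0"
    using H_coset by auto
  moreover have "card (rcosets H) \<noteq> 1"
  proof
    assume "card (rcosets H) = 1"
    then have "rcosets H = {H}" using H_coset by (auto simp: card_1_singleton_iff)
    then show False using rcosets_part_G[OF assms(3)] assms(4) by simp
  qed
  ultimately have "2 \<le> card (rcosets H)" by linarith
  then show ?thesis
    using lagrange[OF assms(3)] mult_le_mono1[of 2 "card (rcosets H)" "card H"] by simp
qed

lemma subgroup_grp_center:
  fixes G (structure)
  assumes "group G"
  shows "subgroup (grp_center G) G"
proof -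
  interpret group G by fact
  have central_mult: "x \<otimes> y \<in> grp_center G"
    if x: "x \<in> grp_center G" and y: "y \<in> grp_center G" for x y
  proof -
    have xy_carrier: "x \<in> carrier G" "y \<in> carrier G" using x y unfolding grp_center_def by auto
    have "x \<otimes> y \<otimes> w = w \<otimes> (x \<otimes> y)" if w: "w \<in> carrier G" for w
    proof -
      have "x \<otimes> y \<otimes> w = x \<otimes> (w \<otimes> y)"
        using y w xy_carrier unfolding grp_center_def by (simp add: m_assoc)
      also have "\<dots> = w \<otimes> x \<otimes> y"
        using x w xy_carrier unfolding grp_center_def by (simp flip: m_assoc)
      finally show ?thesis using w xy_carrier by (simp add: m_assoc)
    qed
    then show ?thesis using xy_carrier unfolding grp_center_def by auto
  qed
  have central_inv: "inv x \<in> grp_center G" if x: "x \<in> grp_center G" for x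
  proof -
    have x_carrier: "x \<in> carrier G" using x unfolding grp_center_def by auto
    have "inv x \<otimes> w = w \<otimes> inv x" if w: "w \<in> carrier G" for w
    proof -
      have "x \<otimes> inv w = inv w \<otimes> x" using x w unfolding grp_center_def by auto
      then have "inv (inv w \<otimes> x) = inv (x \<otimes> inv w)" by simp
      then show ?thesis using x_carrier w by (simp add: inv_mult_group)
    qed
    then show ?thesis using x_carrier unfolding grp_center_def by auto
  qed
  have "\<one> \<in> grp_center G" unfolding grp_center_def by auto
  then show ?thesis
    by (intro subgroupI central_inv central_mult) (auto simp: grp_center_def)
qed

lemma card_grp_center_le_half:
  fixes G (structure)
  assumes "group G" and "finite (carrier G)" and "\<not> comm_group G"
  shows "2 * card (grp_center G) \<le> card (carrier G)"
proof -
  have "grp_center G \<noteq> carrier G"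
    using assms(3) group.group_comm_groupI[OF assms(1)] unfolding grp_center_def by blast
  then show ?thesis
    using proper_subgroup_card_le_half[OF assms(1,2) subgroup_grp_center[OF assms(1)]]
    by (simp add: order_def)
qed

lemma card_central_boundary_edges:
  fixes G (structure)
  assumes fin: "finite (carrier G)" and S: "S \<subseteq> carrier G"
  shows "card (grp_center G \<inter> S) * card (carrier G - S)
           + card (grp_center G - S) * card (S - grp_center G)
         \<le> card (comm_boundary G S)"
proof -
  let ?Z = "grp_center G"
  define D1 where "D1 = (?Z \<inter> S) \<times> (carrier G - S)"
  define D2 where "D2 = (?Z - S) \<times> (S - ?Z)"
  have "finite S" "finite ?Z"
    using fin S finite_subset unfolding grp_center_def by auto
  then have finite_D: "finite D1" "finite D2"
    unfolding D1_def D2_def using fin by simp_all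
  have disjoint_D: "D1 \<inter> D2 = {}" unfolding D1_def D2_def by auto
  have inj: "inj_on (\<lambda>(z, v). {z, v}) (D1 \<union> D2)"
    by (rule inj_onI) (auto simp: D1_def D2_def doubleton_eq_iff)
  have "(\<lambda>(z, v). {z, v}) ` (D1 \<union> D2) \<subseteq> comm_boundary G S"
  proof clarify
    fix z v assume zv: "(z, v) \<in> D1 \<union> D2"
    then have z: "z \<in> ?Z" and v: "v \<in> carrier G" and sides: "(z \<in> S) \<noteq> (v \<in> S)"
      using S unfolding D1_def D2_def by auto
    have "{z, v} \<in> commuting_edges G"
      using z v sides unfolding commuting_edges_def grp_center_def by blast
    moreover have "{z, v} \<inter> S = {z} \<or> {z, v} \<inter> S = {v}" using sides by auto
    ultimately show "{z, v} \<in> comm_boundary G S"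
      unfolding comm_boundary_def by auto
  qed
  moreover have "finite (comm_boundary G S)"
    using fin finite_subset[of "comm_boundary G S" "Pow (carrier G)"]
    unfolding comm_boundary_def commuting_edges_def by auto
  ultimately have "card (D1 \<union> D2) \<le> card (comm_boundary G S)"
    using card_inj_on_le[OF inj] by blast
  then show ?thesis
    using card_Un_disjoint[OF finite_D disjoint_D] unfolding D1_def D2_def
    by (simp add: card_cartesian_product)
qed

lemma comm_bw_attained:
  fixes G (structure)
  assumes "group G" and fin: "finite (carrier G)"
  obtains S where "S \<subset> carrier G" "card S = card (carrier G) div 2"
    "comm_bw G = card (comm_boundary G S)"
proof -
  define W where
    "W = {card (comm_boundary G S) | S. S \<subset> carrier G \<and> card S = card (carrier G) div 2}"
  have "finite W"
    unfolding W_def using fin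
    by (auto intro: finite_subset[of _ "(\<lambda>S. card (comm_boundary G S)) ` Pow (carrier G)"])
  moreover have "W \<noteq> {}"
  proof -
    obtain T where T: "T \<subseteq> carrier G" "card T = card (carrier G) div 2"
      using obtain_subset_with_card_n[of "card (carrier G) div 2" "carrier G"] by auto
    have "\<one> \<in> carrier G" using assms(1) by (simp add: group.is_monoid)
    then have "card (carrier G) \<noteq> 0" using fin by auto
    then have "T \<noteq> carrier G" using T by auto
    then show ?thesis using T unfolding W_def by blast
  qed
  ultimately have "comm_bw G \<in> W"
    unfolding comm_bw_def W_def[symmetric] by (rule Min_in)
  then show ?thesis using that unfolding W_def by blast
qed

lemma comm_bw_ge_central_count:
  fixes G (structure)
  assumes "group G" and fin: "finite (carrier G)" and "\<not> comm_group G"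
  obtains a b where "a + b = card (grp_center G)" "a + b \<le> card (carrier G) div 2"
    "real a * real (card (carrier G) - card (carrier G) div 2)
       + real b * (real (card (carrier G) div 2) - real a) \<le> real (comm_bw G)"
proof -
  let ?Z = "grp_center G" and ?s = "card (carrier G) div 2"
  obtain S where S: "S \<subset> carrier G" "card S = ?s" "comm_bw G = card (comm_boundary G S)"
    using comm_bw_attained[OF assms(1,2)] .
  have finite_S: "finite S" and finite_Z: "finite ?Z"
    using S(1) fin finite_subset unfolding grp_center_def by auto
  have center_split: "card (?Z \<inter> S) + card (?Z - S) = card ?Z"
    using finite_Z by (rule card_Int_Diff[symmetric])
  have small_center: "card ?Z \<le> ?s"
    using card_grp_center_le_half[OF assms(1-3)] by linarith
  have central_in_S: "card (?Z \<inter> S) \<le> ?s"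
    using S(2) finite_S by (metis Int_lower2 card_mono)
  have "card (carrier G - S) = card (carrier G) - ?s"
    using S(1,2) finite_S by (simp add: card_Diff_subset)
  moreover have "card (S - ?Z) = ?s - card (?Z \<inter> S)"
    using S(2) finite_S by (metis Int_commute card_Diff_subset_Int finite_Int)
  ultimately have "card (?Z \<inter> S) * (card (carrier G) - ?s) + card (?Z - S) * (?s - card (?Z \<inter> S))
      \<le> comm_bw G"
    using card_central_boundary_edges[OF fin S(1)[THEN psubset_imp_subset]] unfolding S(3)
    by (simp only:)
  then have "real (card (?Z \<inter> S) * (card (carrier G) - ?s) + card (?Z - S) * (?s - card (?Z \<inter> S)))
      \<le> real (comm_bw G)"
    by (simp only: of_nat_le_iff)
  then have "real (card (?Z \<inter> S)) * real (card (carrier G) - ?s)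
      + real (card (?Z - S)) * (real ?s - real (card (?Z \<inter> S))) \<le> real (comm_bw G)"
    using central_in_S by (simp add: of_nat_diff)
  then show ?thesis
    using that center_split small_center by (simp only:)
qed

lemma split_count_lower_bound_even:
  fixes a b s :: real
  assumes "0 \<le> a" "0 \<le> b" "a + b \<le> s"
  shows "2 * s * (a + b) / 4 \<le> a * s + b * (s - a)"
proof -
  have "a * b \<le> s * b" "a * b \<le> a * s"
    using assms by (simp_all add: mult_right_mono mult_left_mono)
  then have "2 * (a * b) \<le> s * (a + b)" by (simp add: algebra_simps)
  then show ?thesis by (simp add: field_simps)
qed

lemma split_count_lower_bound_odd:
  fixes a b s :: real
  assumes "0 \<le> a" "0 \<le> b" "a + b \<le> s"
  shows "((2 * s + 1)^2 - 1) * (a + b) / (4 * (2 * s + 1)) \<le> a * (s + 1) + b * (s - a)"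
proof -
  have "b * (a * (s + 1)) \<le> (s + 1) * (a * (s + 1))" "a * (b * s) \<le> s * (b * s)"
    using assms by (intro mult_right_mono; simp)+
  then have "s * (s + 1) * (a + b) \<le> (2 * s + 1) * (a * (s + 1) + b * (s - a))"
    by (simp add: algebra_simps)
  moreover have "0 < 2 * s + 1" using assms by simp
  ultimately show ?thesis by (simp add: field_simps power2_eq_square)
qed

lemma comm_bw_ge_even:
  fixes G (structure)
  assumes "group G" and "finite (carrier G)" and "\<not> comm_group G" and "even (card (carrier G))"
  shows "real (card (carrier G)) * real (card (grp_center G)) / 4 \<le> real (comm_bw G)"
proof -
  let ?n = "card (carrier G)"
  define s where "s = ?n div 2"
  obtain a b where ab: "a + b = card (grp_center G)" "a + b \<le> s"
    and count: "real a * real (?n - s) + real b * (real s - real a) \<le> real (comm_bw G)"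
    using comm_bw_ge_central_count[OF assms(1-3)] unfolding s_def .
  have n: "?n = 2 * s" "?n - s = s" using assms(4) unfolding s_def by auto
  have "real ?n * real (card (grp_center G)) / 4 = 2 * real s * (real a + real b) / 4"
    using n(1) by (simp flip: ab(1))
  also have "\<dots> \<le> real a * real s + real b * (real s - real a)"
    using ab(2) by (intro split_count_lower_bound_even) simp_all
  also have "\<dots> \<le> real (comm_bw G)"
    using count n(2) by simp
  finally show ?thesis .
qed

lemma comm_bw_ge_odd:
  fixes G (structure)
  assumes "group G" and "finite (carrier G)" and "\<not> comm_group G" and "odd (card (carrier G))"
  shows "(real (card (carrier G))^2 - 1) * real (card (grp_center G)) / (4 * real (card (carrier G)))
    \<le> real (comm_bw G)"
proof -
  let ?n = "card (carrier G)"
  define s where "s = ?n div 2"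
  obtain a b where ab: "a + b = card (grp_center G)" "a + b \<le> s"
    and count: "real a * real (?n - s) + real b * (real s - real a) \<le> real (comm_bw G)"
    using comm_bw_ge_central_count[OF assms(1-3)] unfolding s_def .
  have n: "?n = 2 * s + 1" "?n - s = s + 1" using assms(4) unfolding s_def by presburger+
  have "(real ?n ^ 2 - 1) * real (card (grp_center G)) / (4 * real ?n)
      = ((2 * real s + 1)^2 - 1) * (real a + real b) / (4 * (2 * real s + 1))"
    using n(1) by (simp flip: ab(1) add: add_ac)
  also have "\<dots> \<le> real a * (real s + 1) + real b * (real s - real a)"
    using ab(2) by (intro split_count_lower_bound_odd) simp_all
  also have "\<dots> \<le> real (comm_bw G)"
    using count n(2) by (simp add: add.commute)
  finally show ?thesis .
qed

theorem corollary3p4: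
  fixes G (structure)
  assumes "group G" and "finite (carrier G)" and "\<not> comm_group G"
    and "con_condition G"
  shows "(even (card (carrier G)) \<longrightarrow>
           real (comm_bw G) \<ge> real (card (carrier G)) * real (card (grp_center G)) / 4) \<and>
         (odd (card (carrier G)) \<longrightarrow>
           real (comm_bw G) \<ge> (real (card (carrier G))^2 - 1) * real (card (grp_center G))
                               / (4 * real (card (carrier G))))"
  using comm_bw_ge_even[OF assms(1-3)] comm_bw_ge_odd[OF assms(1-3)] by simp

end
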